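(* Under Assumptions A1–A3 (with constant $p$), the valuation operator $V$ is irreducible on $L_p(\pi)$: the only closed ideals $J\subset L_p(\pi)$ with $V(J)\subset J$ are $\{0\}$ and $L_p(\pi)$.
   Context: Standing setting: $\{X_t\}_{t\ge0}$ is a stationary Markov process on a separable completely metrizable space $\mathsf X$ with transition kernel $\Pi$, $n$-step kernel $\Pi^n$, and stationary law $\pi$; $\{\eta_t\}$ iid with law $\nu$ on $\mathsf W$, independent of $\{X_t\}$; $\phi,g\ge0$ Borel on $\mathsf X\times\mathsf X\times\mathsf W$ with $\Phi_{t+1}=\phi(X_t,X_{t+1},\eta_{t+1})$, $G_{t+1}=g(X_t,X_{t+1},\eta_{t+1})$. $L_p(\pi)$ is the Banach lattice of $p$-integrable functions modulo $\pi$-null sets with $\pi$-a.e. order; $\mathcal H_p$ its nonnegative elements. An ideal is a vector subspace $J$ such that $f\in J$ whenever $|f|\le|h|$ for some $h\in J$. Valuation operator $Vh(x)=\int h(y)[\int\phi(x,y,\eta)\nu(d\eta)]\Pi(x,dy)$; $\hat g(x)=\int\int\phi g\,d\nu\,\Pi(x,dy)$. A1: $\phi>0$ everywhere and $G_t>0$ with positive probability. A2: for all Borel $B$ with $\pi(B)>0$ and all $x$, $\Pi^n(x,B)>0$ for some $n$. A3: for some $p\ge1$, $\hat g\in\mathcal H_p$ and $V$ maps $L_p(\pi)$ into itself with some power $V^i$ compact. *)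

theory Defs
  imports "HOL-Probability.Probability"
begin

definition Lp :: "'a measure \<Rightarrow> real \<Rightarrow> ('a \<Rightarrow> real) set" where
  "Lp M p = {f. f \<in> borel_measurable M \<and> integrable M (\<lambda>x. \<bar>f x\<bar> powr p)}"

definition Lp_norm :: "'a measure \<Rightarrow> real \<Rightarrow> ('a \<Rightarrow> real) \<Rightarrow> real" where
  "Lp_norm M p f = (\<integral>x. \<bar>f x\<bar> powr p \<partial>M) powr (1 / p)"

text \<open>The zero element of L_p(M), as the set of its representatives.\<close>
definition Lp_zero :: "'a measure \<Rightarrow> real \<Rightarrow> ('a \<Rightarrow> real) set" where
  "Lp_zero M p = {f \<in> Lp M p. AE x in M. f x = 0}"

text \<open>An ideal of the Banach lattice L_p(M), given by the set of all representatives of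
  its elements (hence automatically saturated w.r.t. a.e. equality by solidity).\<close>
definition Lp_ideal :: "'a measure \<Rightarrow> real \<Rightarrow> ('a \<Rightarrow> real) set \<Rightarrow> bool" where
  "Lp_ideal M p J \<longleftrightarrow>
     J \<subseteq> Lp M p \<and> (\<lambda>x. 0) \<in> J \<and>
     (\<forall>f\<in>J. \<forall>h\<in>J. (\<lambda>x. f x + h x) \<in> J) \<and>
     (\<forall>c. \<forall>f\<in>J. (\<lambda>x. c * f x) \<in> J) \<and>
     (\<forall>f\<in>Lp M p. \<forall>h\<in>J. (AE x in M. \<bar>f x\<bar> \<le> \<bar>h x\<bar>) \<longrightarrow> f \<in> J)"

definition Lp_closed :: "'a measure \<Rightarrow> real \<Rightarrow> ('a \<Rightarrow> real) set \<Rightarrow> bool" where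
  "Lp_closed M p J \<longleftrightarrow>
     (\<forall>f h. (\<forall>n. f n \<in> J) \<longrightarrow> h \<in> Lp M p \<longrightarrow>
        (\<lambda>n. Lp_norm M p (\<lambda>x. f n x - h x)) \<longlonglongrightarrow> 0 \<longrightarrow> h \<in> J)"

definition Lp_compact_op :: "'a measure \<Rightarrow> real \<Rightarrow> (('a \<Rightarrow> real) \<Rightarrow> ('a \<Rightarrow> real)) \<Rightarrow> bool" where
  "Lp_compact_op M p T \<longleftrightarrow>
     (\<forall>(f :: nat \<Rightarrow> 'a \<Rightarrow> real) C. (\<forall>n. f n \<in> Lp M p \<and> Lp_norm M p (f n) \<le> C) \<longrightarrow>
        (\<exists>r h. strict_mono r \<and> h \<in> Lp M p \<and>
           (\<lambda>n. Lp_norm M p (\<lambda>x. T (f (r n)) x - h x)) \<longlonglongrightarrow> 0))"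

primrec kpow :: "('a::topological_space \<Rightarrow> 'a measure) \<Rightarrow> nat \<Rightarrow> 'a \<Rightarrow> 'a measure" where
  "kpow K 0 = (\<lambda>x. return borel x)"
| "kpow K (Suc n) = (\<lambda>x. bind (kpow K n x) K)"

definition valop :: "('a \<Rightarrow> 'a measure) \<Rightarrow> 'w measure \<Rightarrow> ('a \<Rightarrow> 'a \<Rightarrow> 'w \<Rightarrow> real)
     \<Rightarrow> ('a \<Rightarrow> real) \<Rightarrow> ('a \<Rightarrow> real)" where
  "valop K nu phi h = (\<lambda>x. \<integral>y. h y * (\<integral>e. phi x y e \<partial>nu) \<partial>K x)"

definition ghat :: "('a \<Rightarrow> 'a measure) \<Rightarrow> 'w measure \<Rightarrow> ('a \<Rightarrow> 'a \<Rightarrow> 'w \<Rightarrow> real)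
     \<Rightarrow> ('a \<Rightarrow> 'a \<Rightarrow> 'w \<Rightarrow> real) \<Rightarrow> 'a \<Rightarrow> ennreal" where
  "ghat K nu phi g x = (\<integral>\<^sup>+y. \<integral>\<^sup>+e. ennreal (phi x y e * g x y e) \<partial>nu \<partial>K x)"

end

theory Submission
  imports Defs
begin

text \<open>Let \<open>J \<noteq> {0}\<close> be a closed \<open>V\<close>-invariant ideal and \<open>0 \<le> h\<^sub>0 \<in> J\<close> nonzero. The supports of
  the iterates \<open>V\<^sup>n h\<^sub>0 \<in> J\<close> exhaust a set \<open>S\<close> of positive measure. Since \<open>\<phi> > 0\<close>, \<open>V h (x) = 0\<close>
  forces \<open>h = 0\<close> \<open>\<Pi>(x,\<cdot>)\<close>-a.e., so the chain started outside \<open>S\<close> never enters \<open>S\<close> (up to a null set,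
  which stationarity of \<open>\<pi>\<close> keeps null for all times); irreducibility (A2) then makes the complement
  of \<open>S\<close> null. Hence the iterates form a weak unit of \<open>L\<^sub>p(\<pi>)\<close>, and truncation against their partial
  sums plus dominated convergence shows that the closed ideal they generate is all of \<open>L\<^sub>p(\<pi>)\<close>.\<close>

lemma kpow_measurable:
  assumes K: "K \<in> borel \<rightarrow>\<^sub>M subprob_algebra borel"
  shows "kpow K n \<in> borel \<rightarrow>\<^sub>M subprob_algebra borel"
proof (induction n)
  case 0 then show ?case by (simp add: return_measurable)
next
  case (Suc n) then show ?case using K by (simp add: measurable_bind2)
qed

lemma sets_kpow: "K \<in> borel \<rightarrow>\<^sub>M subprob_algebra borel \<Longrightarrow> sets (kpow K n x) = sets borel"
  using sets_kernel[OF kpow_measurable] by auto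

lemma kpow_1: "K \<in> borel \<rightarrow>\<^sub>M subprob_algebra borel \<Longrightarrow> kpow K (Suc 0) x = K x"
  by (simp add: bind_return)

lemma bind_eq_if_stationary:
  assumes K: "K \<in> borel \<rightarrow>\<^sub>M subprob_algebra borel"
    and Q: "prob_space Q" "sets Q = sets borel"
    and stationary: "\<And>B. B \<in> sets borel \<Longrightarrow> (\<integral>\<^sup>+x. emeasure (K x) B \<partial>Q) = emeasure Q B"
  shows "bind Q K = Q"
proof -
  have KQ: "K \<in> Q \<rightarrow>\<^sub>M subprob_algebra borel" using K measurable_cong_sets[OF Q(2) refl] by blast
  have ne: "space Q \<noteq> {}" using Q(1) prob_space.not_empty by blast
  have sets_bind: "sets (bind Q K) = sets borel" using sets_bind[OF sets_kernel[OF KQ] ne] by simp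
  show ?thesis
  proof (rule measure_eqI)
    show "sets (bind Q K) = sets Q" using sets_bind Q(2) by simp
    fix A assume "A \<in> sets (bind Q K)"
    then have A: "A \<in> sets borel" using sets_bind by simp
    show "emeasure (bind Q K) A = emeasure Q A"
      using emeasure_bind[OF ne KQ A] stationary[OF A] by simp
  qed
qed

lemma bind_kpow_stationary:
  assumes K: "K \<in> borel \<rightarrow>\<^sub>M subprob_algebra borel"
    and Q: "sets Q = sets borel" and stationary: "bind Q K = Q"
  shows "bind Q (kpow K n) = Q"
proof (induction n)
  case 0
  show ?case using bind_return''[of Q borel] Q by simp
next
  case (Suc n)
  have "kpow K n \<in> Q \<rightarrow>\<^sub>M subprob_algebra borel"
    using kpow_measurable[OF K] measurable_cong_sets[OF Q refl] by blast
  then have "bind Q (kpow K (Suc n)) = bind (bind Q (kpow K n)) K"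
    using bind_assoc[OF _ K, symmetric] by simp
  also have "\<dots> = Q" using Suc stationary by simp
  finally show ?case .
qed

lemma AE_kpow_null:
  assumes K: "K \<in> borel \<rightarrow>\<^sub>M subprob_algebra borel"
    and Q: "prob_space Q" "sets Q = sets borel" and stationary: "bind Q K = Q"
    and N: "N \<in> sets borel" "emeasure Q N = 0"
  shows "AE x in Q. emeasure (kpow K n x) N = 0"
proof -
  have kp: "kpow K n \<in> Q \<rightarrow>\<^sub>M subprob_algebra borel"
    using kpow_measurable[OF K] measurable_cong_sets[OF Q(2) refl] by blast
  have ne: "space Q \<noteq> {}" using Q(1) prob_space.not_empty by blast
  have "(\<integral>\<^sup>+x. emeasure (kpow K n x) N \<partial>Q) = 0"
    using emeasure_bind[OF ne kp N(1)] bind_kpow_stationary[OF K Q(2) stationary, of n] N(2) by simp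
  then show ?thesis
    using measurable_emeasure_kernel[OF kp N(1)] by (simp add: nn_integral_0_iff_AE)
qed

lemma kpow_avoids_closed_complement:
  assumes K: "K \<in> borel \<rightarrow>\<^sub>M subprob_algebra borel"
    and S: "S \<in> sets borel" and N: "N \<in> sets borel"
    and x: "x \<notin> S" "x \<notin> N"
    and closed: "\<And>y. y \<notin> S \<Longrightarrow> y \<notin> N \<Longrightarrow> emeasure (K y) S = 0"
    and avoids_N: "\<And>n. emeasure (kpow K n x) N = 0"
  shows "emeasure (kpow K (Suc n) x) S = 0"
proof (induction n)
  case 0 then show ?case using kpow_1[OF K] closed x by simp
next
  case (Suc n)
  let ?M = "kpow K (Suc n) x"
  have sM: "sets ?M = sets borel" using sets_kpow[OF K] .
  have ne: "space ?M \<noteq> {}" using sets_eq_imp_space_eq[OF sM] by simp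
  have KM: "K \<in> ?M \<rightarrow>\<^sub>M subprob_algebra borel" using K measurable_cong_sets[OF sM refl] by blast
  have K_le: "emeasure (K y) S \<le> indicator (S \<union> N) y" for y
  proof (cases "y \<in> S \<union> N")
    case True
    have "subprob_space (K y)" using subprob_space_kernel[OF K] by simp
    then show ?thesis using True subprob_space.subprob_emeasure_le_1 by simp
  qed (use closed in simp)
  have "emeasure (kpow K (Suc (Suc n)) x) S = (\<integral>\<^sup>+y. emeasure (K y) S \<partial>?M)"
    using emeasure_bind[OF ne KM S] by simp
  also have "\<dots> \<le> (\<integral>\<^sup>+y. indicator (S \<union> N) y \<partial>?M)"
    using K_le by (intro nn_integral_mono)
  also have "\<dots> = emeasure ?M (S \<union> N)"
    using S N sM by (simp add: nn_integral_indicator)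
  also have "\<dots> \<le> emeasure ?M S + emeasure ?M N"
    using S N sM by (intro emeasure_subadditive) auto
  also have "\<dots> = 0" using Suc avoids_N[of "Suc n"] by simp
  finally show ?case by simp
qed

lemma AE_mem_if_reachable_and_complement_closed:
  assumes K: "K \<in> borel \<rightarrow>\<^sub>M subprob_algebra borel"
    and Q: "prob_space Q" "sets Q = sets borel" and stationary: "bind Q K = Q"
    and S: "S \<in> sets borel"
    and reachable: "\<And>x. \<exists>n\<ge>1. emeasure (kpow K n x) S > 0"
    and closed: "AE x in Q. x \<notin> S \<longrightarrow> emeasure (K x) S = 0"
  shows "AE x in Q. x \<in> S"
proof -
  have space_Q: "space Q = UNIV" using sets_eq_imp_space_eq[OF Q(2)] by simp
  define N where "N = {x. x \<notin> S \<and> emeasure (K x) S \<noteq> 0}"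
  have [measurable]: "(\<lambda>x. emeasure (K x) S) \<in> borel_measurable borel"
    using measurable_emeasure_kernel[OF K S] .
  have N_sets: "N \<in> sets borel" unfolding N_def using S by measurable
  have N_null: "emeasure Q N = 0"
    using closed AE_iff_measurable[of N Q] N_sets Q(2) space_Q unfolding N_def by auto
  have "AE x in Q. \<forall>n. emeasure (kpow K n x) N = 0"
    unfolding AE_all_countable using AE_kpow_null[OF K Q stationary N_sets N_null] by blast
  moreover have "AE x in Q. x \<notin> N"
    using AE_iff_measurable[of N Q "\<lambda>x. x \<notin> N"] N_sets N_null Q(2) space_Q by auto
  ultimately show ?thesis
  proof eventually_elim
    case (elim x)
    show "x \<in> S"
    proof (rule ccontr)
      assume "x \<notin> S"
      then have "emeasure (kpow K (Suc n) x) S = 0" for n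
        by (rule kpow_avoids_closed_complement[OF K S N_sets _ elim(2)]) (use elim in \<open>auto simp: N_def\<close>)
      moreover obtain n where "n \<ge> 1" "emeasure (kpow K n x) S > 0" using reachable by blast
      ultimately show False by (cases n) auto
    qed
  qed
qed

lemma valop_funpow_nonneg:
  assumes "\<And>x y e. phi x y e \<ge> 0" and "\<And>y. h y \<ge> 0"
  shows "(valop K nu phi ^^ n) h x \<ge> 0"
proof (induction n arbitrary: x)
  case (Suc n)
  have "valop K nu phi g x \<ge> 0" if "\<And>y. g y \<ge> 0" for g
    unfolding valop_def using that assms(1)
    by (intro Bochner_Integration.integral_nonneg mult_nonneg_nonneg) auto
  with Suc show ?case by simp
qed (use assms(2) in simp)

lemma (in prob_space) integral_pos_if_pos:
  assumes f: "f \<in> borel_measurable M" and pos: "\<And>x. f x > 0"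
    and finite: "(\<integral>\<^sup>+x. ennreal (f x) \<partial>M) < \<infinity>"
  shows "(\<integral>x. f x \<partial>M) > 0"
proof -
  have "(\<integral>\<^sup>+x. ennreal (f x) \<partial>M) \<noteq> 0"
  proof
    assume "(\<integral>\<^sup>+x. ennreal (f x) \<partial>M) = 0"
    then have "AE x in M. ennreal (f x) = 0" using f by (subst (asm) nn_integral_0_iff_AE) auto
    then have "AE x in M. False" by (rule eventually_mono) (metis pos ennreal_eq_0_iff not_le)
    then show False by simp
  qed
  moreover have "(\<integral>x. f x \<partial>M) = enn2real (\<integral>\<^sup>+x. ennreal (f x) \<partial>M)"
    using f pos less_imp_le by (intro integral_eq_nn_integral) auto
  ultimately show ?thesis
    using finite by (simp add: enn2real_positive_iff less_top[symmetric] zero_less_iff_neq_zero)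
qed

lemma measurable_phi_section:
  assumes "(\<lambda>(x, y, e). phi x y e) \<in> borel_measurable (borel \<Otimes>\<^sub>M borel \<Otimes>\<^sub>M nu)"
  shows "(\<lambda>(y, e). phi x y e) \<in> borel_measurable (borel \<Otimes>\<^sub>M nu)"
proof -
  have "(\<lambda>(y, e). (x, y, e)) \<in> (borel \<Otimes>\<^sub>M nu) \<rightarrow>\<^sub>M (borel \<Otimes>\<^sub>M borel \<Otimes>\<^sub>M nu)"
    by measurable
  from measurable_compose[OF this assms] show ?thesis
    by (simp add: case_prod_beta')
qed

text \<open>\<open>finite_1\<close> makes the weight \<open>y \<mapsto> \<integral>\<phi>(x,y,e) d\<nu>\<close> finite, hence a positive real, for
  \<open>\<Pi>(x,\<cdot>)\<close>-a.e. \<open>y\<close>; a weight \<open>\<infinity>\<close> would be read as \<open>0\<close> by the Bochner integral.\<close>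

lemma valop_eq_0_imp_AE_eq_0:
  assumes K: "K \<in> borel \<rightarrow>\<^sub>M subprob_algebra borel"
    and nu: "prob_space nu"
    and phi_meas: "(\<lambda>(x, y, e). phi x y e) \<in> borel_measurable (borel \<Otimes>\<^sub>M borel \<Otimes>\<^sub>M nu)"
    and phi_pos: "\<And>x y e. phi x y e > 0"
    and h_meas: "h \<in> borel_measurable borel" and h_nonneg: "\<And>y. h y \<ge> 0"
    and finite_1: "(\<integral>\<^sup>+y. ennreal \<bar>1\<bar> * (\<integral>\<^sup>+e. ennreal (phi x y e) \<partial>nu) \<partial>K x) < \<infinity>"
    and finite_h: "(\<integral>\<^sup>+y. ennreal \<bar>h y\<bar> * (\<integral>\<^sup>+e. ennreal (phi x y e) \<partial>nu) \<partial>K x) < \<infinity>"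
    and V_eq_0: "valop K nu phi h x = 0"
  shows "AE y in K x. h y = 0"
proof -
  interpret nu: prob_space nu by (rule nu)
  define W where "W y = (\<integral>\<^sup>+e. ennreal (phi x y e) \<partial>nu)" for y
  define w where "w y = (\<integral>e. phi x y e \<partial>nu)" for y
  have sK: "sets (K x) = sets borel" using sets_kernel[OF K] by simp
  have [measurable]: "(\<lambda>(y, e). phi x y e) \<in> borel_measurable (borel \<Otimes>\<^sub>M nu)"
    by (rule measurable_phi_section[OF phi_meas])
  have [measurable]: "(\<lambda>e. phi x y e) \<in> borel_measurable nu" for y
    using measurable_Pair2[of "\<lambda>(y, e). phi x y e" borel nu borel y] by simp
  have W_meas: "W \<in> borel_measurable (K x)" and w_meas: "w \<in> borel_measurable (K x)"
    and h_meas': "h \<in> borel_measurable (K x)"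
    unfolding W_def w_def measurable_cong_sets[OF sK refl] using h_meas by measurable
  have w_eq: "w y = enn2real (W y)" for y
    unfolding w_def W_def using phi_pos[of x y] less_imp_le
    by (intro integral_eq_nn_integral) auto
  have w_nonneg: "w y \<ge> 0" for y by (simp add: w_eq)
  have w_pos: "w y > 0" if "W y < \<infinity>" for y
    unfolding w_def using that phi_pos unfolding W_def by (intro nu.integral_pos_if_pos) auto
  have AE_W_finite: "AE y in K x. W y < \<infinity>"
    using nn_integral_PInf_AE[OF W_meas] finite_1 unfolding W_def by (simp add: less_top)
  have int: "integrable (K x) (\<lambda>y. h y * w y)"
  proof (subst integrable_iff_bounded, intro conjI)
    show "(\<lambda>y. h y * w y) \<in> borel_measurable (K x)" using h_meas' w_meas by measurable
    have "ennreal (norm (h y * w y)) \<le> ennreal \<bar>h y\<bar> * W y" for y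
      using w_nonneg[of y] by (simp add: abs_mult ennreal_mult w_eq ennreal_enn2real_if mult_left_mono)
    then have "(\<integral>\<^sup>+y. ennreal (norm (h y * w y)) \<partial>K x) \<le> (\<integral>\<^sup>+y. ennreal \<bar>h y\<bar> * W y \<partial>K x)"
      by (rule nn_integral_mono)
    also have "\<dots> < \<infinity>" using finite_h unfolding W_def .
    finally show "(\<integral>\<^sup>+y. ennreal (norm (h y * w y)) \<partial>K x) < \<infinity>" .
  qed
  have "integral\<^sup>L (K x) (\<lambda>y. h y * w y) = 0"
    using V_eq_0 unfolding valop_def w_def by simp
  then have "AE y in K x. h y * w y = 0"
    using integral_nonneg_eq_0_iff_AE[OF int] h_nonneg w_nonneg by simp
  with AE_W_finite show ?thesis
    by eventually_elim (use w_pos in force)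
qed

lemma
  assumes "Lp_ideal M p J"
  shows Lp_ideal_subset: "J \<subseteq> Lp M p"
    and Lp_ideal_add: "f \<in> J \<Longrightarrow> h \<in> J \<Longrightarrow> (\<lambda>x. f x + h x) \<in> J"
    and Lp_ideal_scale: "f \<in> J \<Longrightarrow> (\<lambda>x. c * f x) \<in> J"
    and Lp_ideal_solid: "f \<in> Lp M p \<Longrightarrow> h \<in> J \<Longrightarrow> AE x in M. \<bar>f x\<bar> \<le> \<bar>h x\<bar> \<Longrightarrow> f \<in> J"
  using assms unfolding Lp_ideal_def by blast+

lemma Lp_ideal_abs:
  assumes ideal: "Lp_ideal M p J" and f: "f \<in> J"
  shows "(\<lambda>x. \<bar>f x\<bar>) \<in> J"
proof (rule Lp_ideal_solid[OF ideal _ f])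
  show "(\<lambda>x. \<bar>f x\<bar>) \<in> Lp M p" using Lp_ideal_subset[OF ideal] f unfolding Lp_def by auto
qed simp

lemma Lp_ideal_eq_Lp_zero:
  assumes ideal: "Lp_ideal M p J" and zero: "\<forall>f\<in>J. AE x in M. f x = 0"
  shows "J = Lp_zero M p"
proof
  show "J \<subseteq> Lp_zero M p" using Lp_ideal_subset[OF ideal] zero unfolding Lp_zero_def by auto
  show "Lp_zero M p \<subseteq> J"
  proof
    fix f assume "f \<in> Lp_zero M p"
    then have "f \<in> Lp M p" "AE x in M. \<bar>f x\<bar> \<le> \<bar>0\<bar>" unfolding Lp_zero_def by auto
    moreover have "(\<lambda>x. 0) \<in> J" using ideal unfolding Lp_ideal_def by blast
    ultimately show "f \<in> J" using Lp_ideal_solid[OF ideal] by blast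
  qed
qed

lemma Lp_closed_mem_if_dominated_limit:
  fixes fs :: "nat \<Rightarrow> 'a \<Rightarrow> real"
  assumes closed: "Lp_closed M p J" and p: "p > 0" and f: "f \<in> Lp M p"
    and fs_J: "\<And>k. fs k \<in> J" and fs_meas: "\<And>k. fs k \<in> borel_measurable M"
    and dominated: "\<And>k x. \<bar>fs k x\<bar> \<le> \<bar>f x\<bar>"
    and lim: "AE x in M. (\<lambda>k. fs k x) \<longlonglongrightarrow> f x"
  shows "f \<in> J"
proof -
  have [measurable]: "f \<in> borel_measurable M" "fs k \<in> borel_measurable M" for k
    using f fs_meas unfolding Lp_def by auto
  have f_int: "integrable M (\<lambda>x. \<bar>f x\<bar> powr p)" using f unfolding Lp_def by simp
  have "(\<lambda>k. \<integral>x. \<bar>fs k x - f x\<bar> powr p \<partial>M) \<longlonglongrightarrow> (\<integral>x. 0 \<partial>M)"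
  proof (rule integral_dominated_convergence[where w="\<lambda>x. 2 powr p * \<bar>f x\<bar> powr p"])
    show "AE x in M. norm (\<bar>fs k x - f x\<bar> powr p) \<le> 2 powr p * \<bar>f x\<bar> powr p" for k
    proof (intro AE_I2)
      fix x
      have "\<bar>fs k x - f x\<bar> \<le> 2 * \<bar>f x\<bar>" using dominated[of k x] by linarith
      then have "\<bar>fs k x - f x\<bar> powr p \<le> (2 * \<bar>f x\<bar>) powr p" using p by (intro powr_mono2) auto
      then show "norm (\<bar>fs k x - f x\<bar> powr p) \<le> 2 powr p * \<bar>f x\<bar> powr p" by (simp add: powr_mult)
    qed
    show "AE x in M. (\<lambda>k. \<bar>fs k x - f x\<bar> powr p) \<longlonglongrightarrow> 0" using lim
    proof eventually_elim
      case (elim x)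
      then have "(\<lambda>k. \<bar>fs k x - f x\<bar>) \<longlonglongrightarrow> 0" by (intro tendsto_rabs_zero LIM_zero)
      then show ?case using p by (intro tendsto_zero_powrI[OF _ tendsto_const]) auto
    qed
  qed (simp_all add: f_int)
  then have "(\<lambda>k. (\<integral>x. \<bar>fs k x - f x\<bar> powr p \<partial>M) powr (1 / p)) \<longlonglongrightarrow> 0"
    using p by (intro tendsto_zero_powrI[OF _ tendsto_const])
      (auto intro!: always_eventually Bochner_Integration.integral_nonneg)
  then show "f \<in> J"
    using closed fs_J f unfolding Lp_closed_def Lp_norm_def by blast
qed

text \<open>\<open>f\<close> is the limit of its truncations \<open>f \<cdot> 1{|f| \<le> k \<Sigma>\<^sub>n\<^sub>\<le>\<^sub>k h\<^sub>n}\<close>, which lie in the ideal by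
  solidity.\<close>

lemma Lp_closed_ideal_eq_Lp:
  fixes hs :: "nat \<Rightarrow> 'a \<Rightarrow> real"
  assumes ideal: "Lp_ideal M p J" and closed: "Lp_closed M p J" and p: "p > 0"
    and hs_J: "\<And>n. hs n \<in> J" and hs_nonneg: "\<And>n x. hs n x \<ge> 0"
    and hs_pos: "AE x in M. \<exists>n. hs n x > 0"
  shows "J = Lp M p"
proof
  show "J \<subseteq> Lp M p" by (rule Lp_ideal_subset[OF ideal])
  show "Lp M p \<subseteq> J"
  proof
    fix f assume f: "f \<in> Lp M p"
    have [measurable]: "f \<in> borel_measurable M" "hs n \<in> borel_measurable M" for n
      using f hs_J Lp_ideal_subset[OF ideal] unfolding Lp_def by auto
    define u where "u k x = (\<Sum>n\<le>k. hs n x)" for k x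
    define fk where "fk k x = (if \<bar>f x\<bar> \<le> real k * u k x then f x else 0)" for k x
    have u_J: "(\<lambda>x. real k * u k x) \<in> J" for k
    proof -
      have "u k \<in> J"
      proof (induction k)
        case 0 show ?case using hs_J[of 0] by (simp add: u_def)
      next
        case (Suc k)
        have "u (Suc k) = (\<lambda>x. u k x + hs (Suc k) x)" by (simp add: u_def fun_eq_iff)
        then show ?case using Lp_ideal_add[OF ideal Suc hs_J] by simp
      qed
      then show ?thesis by (rule Lp_ideal_scale[OF ideal])
    qed
    have fk_meas[measurable]: "fk k \<in> borel_measurable M" for k unfolding fk_def u_def by measurable
    have "integrable M (\<lambda>x. \<bar>fk k x\<bar> powr p)" for k
    proof (rule Bochner_Integration.integrable_bound)
      show "integrable M (\<lambda>x. \<bar>f x\<bar> powr p)" using f unfolding Lp_def by simp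
      show "AE x in M. norm (\<bar>fk k x\<bar> powr p) \<le> norm (\<bar>f x\<bar> powr p)" by (simp add: fk_def)
    qed measurable
    then have fk_J: "fk k \<in> J" for k
      by (intro Lp_ideal_solid[OF ideal _ u_J[of k]]) (auto simp: Lp_def fk_def)
    have "AE x in M. (\<lambda>k. fk k x) \<longlonglongrightarrow> f x" using hs_pos
    proof eventually_elim
      case (elim x)
      then obtain n where n: "hs n x > 0" by blast
      obtain m :: nat where m: "\<bar>f x\<bar> / hs n x \<le> real m" using real_arch_simple by blast
      have "fk k x = f x" if k: "max n m \<le> k" for k
      proof -
        have "hs n x \<le> u k x" unfolding u_def using k hs_nonneg by (intro member_le_sum) auto
        have "\<bar>f x\<bar> \<le> real m * hs n x" using m n by (simp add: divide_le_eq)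
        also have "\<dots> \<le> real k * u k x" using k \<open>hs n x \<le> u k x\<close> n by (intro mult_mono) auto
        finally show ?thesis by (simp add: fk_def)
      qed
      then show ?case by (intro tendsto_eventually eventually_sequentiallyI)
    qed
    then show "f \<in> J"
      by (rule Lp_closed_mem_if_dominated_limit[OF closed p f fk_J fk_meas, rotated]) (simp add: fk_def)
  qed
qed

lemma valop_iterates_support_complement_closed:
  fixes K :: "'a::polish_space \<Rightarrow> 'a measure" and pi :: "'a measure" and hs :: "nat \<Rightarrow> 'a \<Rightarrow> real"
  assumes K: "K \<in> borel \<rightarrow>\<^sub>M subprob_algebra borel" and pi: "prob_space pi" "sets pi = sets borel"
    and nu: "prob_space nu"
    and phi_meas: "(\<lambda>(x, y, e). phi x y e) \<in> borel_measurable (borel \<Otimes>\<^sub>M borel \<Otimes>\<^sub>M nu)"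
    and phi_pos: "\<And>x y e. phi x y e > 0"
    and V_finite: "\<And>h. h \<in> Lp pi p \<Longrightarrow>
          AE x in pi. (\<integral>\<^sup>+y. ennreal \<bar>h y\<bar> * (\<integral>\<^sup>+e. ennreal (phi x y e) \<partial>nu) \<partial>K x) < \<infinity>"
    and hs_L: "\<And>n. hs n \<in> Lp pi p" and hs_nonneg: "\<And>n x. hs n x \<ge> 0"
    and hs_Suc: "\<And>n. hs (Suc n) = valop K nu phi (hs n)"
  defines "S \<equiv> {x. \<exists>n. hs n x > 0}"
  shows "AE x in pi. x \<notin> S \<longrightarrow> emeasure (K x) S = 0"
proof -
  interpret pi: prob_space pi by (rule pi(1))
  have [measurable]: "hs n \<in> borel_measurable borel" for n
    using hs_L measurable_cong_sets[OF pi(2) refl] unfolding Lp_def by blast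
  have S_sets: "S \<in> sets borel" unfolding S_def by measurable
  have "(\<lambda>_. 1::real) \<in> Lp pi p" unfolding Lp_def by auto
  from V_finite[OF this]
  have "AE x in pi. (\<integral>\<^sup>+y. ennreal \<bar>1\<bar> * (\<integral>\<^sup>+e. ennreal (phi x y e) \<partial>nu) \<partial>K x) < \<infinity>"
    by simp
  moreover have "AE x in pi. \<forall>n. (\<integral>\<^sup>+y. ennreal \<bar>hs n y\<bar> * (\<integral>\<^sup>+e. ennreal (phi x y e) \<partial>nu) \<partial>K x) < \<infinity>"
    unfolding AE_all_countable using V_finite hs_L by blast
  ultimately show ?thesis
  proof eventually_elim
    case (elim x)
    show ?case
    proof
      assume "x \<notin> S"
      then have "hs (Suc n) x = 0" for n
        using hs_nonneg[of "Suc n" x] by (auto simp: S_def not_less intro: antisym)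
      then have "AE y in K x. hs n y = 0" for n
        using elim by (intro valop_eq_0_imp_AE_eq_0[OF K nu phi_meas phi_pos _ hs_nonneg]) (auto simp: hs_Suc)
      then have "AE y in K x. \<forall>n. hs n y = 0" by (simp add: AE_all_countable)
      then have "AE y in K x. y \<notin> S" by (rule eventually_mono) (simp add: S_def)
      moreover have "sets (K x) = sets borel" using sets_kernel[OF K] by simp
      moreover from this have "space (K x) = UNIV" using sets_eq_imp_space_eq by force
      ultimately show "emeasure (K x) S = 0"
        using AE_iff_measurable[of S "K x" "\<lambda>y. y \<notin> S"] S_sets by auto
    qed
  qed
qed

lemma valop_iterates_AE_pos:
  fixes K :: "'a::polish_space \<Rightarrow> 'a measure" and pi :: "'a measure"
  assumes K: "K \<in> borel \<rightarrow>\<^sub>M subprob_algebra borel"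
    and pi: "prob_space pi" "sets pi = sets borel" and stationary: "bind pi K = pi"
    and nu: "prob_space nu"
    and phi_meas: "(\<lambda>(x, y, e). phi x y e) \<in> borel_measurable (borel \<Otimes>\<^sub>M borel \<Otimes>\<^sub>M nu)"
    and phi_pos: "\<And>x y e. phi x y e > 0"
    and irreducible: "\<And>B x. B \<in> sets borel \<Longrightarrow> emeasure pi B > 0 \<Longrightarrow>
               \<exists>n\<ge>1. emeasure (kpow K n x) B > 0"
    and V_finite: "\<And>h. h \<in> Lp pi p \<Longrightarrow>
          AE x in pi. (\<integral>\<^sup>+y. ennreal \<bar>h y\<bar> * (\<integral>\<^sup>+e. ennreal (phi x y e) \<partial>nu) \<partial>K x) < \<infinity>"
    and V_maps: "\<And>h. h \<in> Lp pi p \<Longrightarrow> valop K nu phi h \<in> Lp pi p"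
    and h0: "h0 \<in> Lp pi p" "\<And>x. h0 x \<ge> 0" "\<not> (AE x in pi. h0 x = 0)"
  shows "AE x in pi. \<exists>n. (valop K nu phi ^^ n) h0 x > 0"
proof -
  define hs where "hs n = (valop K nu phi ^^ n) h0" for n
  define S where "S = {x. \<exists>n. hs n x > 0}"
  have hs_L: "hs n \<in> Lp pi p" for n
    by (induction n) (simp_all add: hs_def h0(1) V_maps)
  have hs_nonneg: "hs n x \<ge> 0" for n x
    unfolding hs_def by (rule valop_funpow_nonneg) (simp_all add: less_imp_le phi_pos h0(2))
  have [measurable]: "hs n \<in> borel_measurable borel" for n
    using hs_L measurable_cong_sets[OF pi(2) refl] unfolding Lp_def by blast
  have S_sets: "S \<in> sets borel" unfolding S_def by measurable
  have "{x. hs 0 x \<noteq> 0} \<in> sets borel" by measurable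
  then have "0 < emeasure pi {x. h0 x \<noteq> 0}"
    using h0(3) AE_iff_measurable[of _ pi "\<lambda>x. h0 x = 0"] pi(2) sets_eq_imp_space_eq[OF pi(2)]
    by (auto simp: hs_def zero_less_iff_neq_zero)
  also have "\<dots> \<le> emeasure pi S"
    using h0(2) S_sets pi(2) unfolding S_def
    by (intro emeasure_mono) (auto intro!: exI[of _ 0] simp: hs_def order.strict_iff_order)
  finally have "emeasure pi S > 0" .
  from AE_mem_if_reachable_and_complement_closed[OF K pi stationary S_sets irreducible[OF S_sets this]]
    valop_iterates_support_complement_closed[OF K pi nu phi_meas phi_pos V_finite hs_L hs_nonneg]
  show ?thesis by (simp add: S_def hs_def)
qed

theorem mainTheorem9:
  fixes K :: "'a::polish_space \<Rightarrow> 'a measure"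
    and pi :: "'a measure" and nu :: "'w measure"
    and phi g :: "'a \<Rightarrow> 'a \<Rightarrow> 'w \<Rightarrow> real"
    and p :: real
  assumes kernel: "K \<in> borel \<rightarrow>\<^sub>M prob_algebra borel"
    and pi_prob: "prob_space pi" and pi_sets: "sets pi = sets borel"
    and pi_stationary: "\<And>B. B \<in> sets borel \<Longrightarrow> (\<integral>\<^sup>+x. emeasure (K x) B \<partial>pi) = emeasure pi B"
    and nu_prob: "prob_space nu"
    and phi_meas: "(\<lambda>(x, y, e). phi x y e) \<in> borel_measurable (borel \<Otimes>\<^sub>M borel \<Otimes>\<^sub>M nu)"
    and g_meas: "(\<lambda>(x, y, e). g x y e) \<in> borel_measurable (borel \<Otimes>\<^sub>M borel \<Otimes>\<^sub>M nu)"
    and g_nonneg: "\<And>x y e. g x y e \<ge> 0"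
    \<comment> \<open>A1\<close>
    and A1_phi_pos: "\<And>x y e. phi x y e > 0"
    and A1_G_pos: "(\<integral>\<^sup>+x. \<integral>\<^sup>+y. \<integral>\<^sup>+e. indicator {e. g x y e > 0} e \<partial>nu \<partial>K x \<partial>pi) > 0"
    \<comment> \<open>A2\<close>
    and A2: "\<And>B x. B \<in> sets borel \<Longrightarrow> emeasure pi B > 0 \<Longrightarrow>
               \<exists>n\<ge>1. emeasure (kpow K n x) B > 0"
    \<comment> \<open>A3\<close>
    and p_ge: "p \<ge> 1"
    and A3_ghat: "AE x in pi. ghat K nu phi g x < \<infinity>"
    and A3_ghat_Lp: "(\<lambda>x. enn2real (ghat K nu phi g x)) \<in> Lp pi p"
    and A3_V_defined: "\<And>h. h \<in> Lp pi p \<Longrightarrow>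
          AE x in pi. (\<integral>\<^sup>+y. ennreal \<bar>h y\<bar> * (\<integral>\<^sup>+e. ennreal (phi x y e) \<partial>nu) \<partial>K x) < \<infinity>"
    and A3_V_maps: "\<And>h. h \<in> Lp pi p \<Longrightarrow> valop K nu phi h \<in> Lp pi p"
    and A3_compact: "\<exists>i\<ge>1. Lp_compact_op pi p (valop K nu phi ^^ i)"
  shows "\<forall>J. Lp_ideal pi p J \<and> Lp_closed pi p J \<and> (\<forall>h\<in>J. valop K nu phi h \<in> J)
            \<longrightarrow> J = Lp_zero pi p \<or> J = Lp pi p"
proof (intro allI impI)
  fix J assume "Lp_ideal pi p J \<and> Lp_closed pi p J \<and> (\<forall>h\<in>J. valop K nu phi h \<in> J)"
  then have ideal: "Lp_ideal pi p J" and closed: "Lp_closed pi p J"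
    and invariant: "\<And>h. h \<in> J \<Longrightarrow> valop K nu phi h \<in> J" by auto
  show "J = Lp_zero pi p \<or> J = Lp pi p"
  proof (cases "\<forall>f\<in>J. AE x in pi. f x = 0")
    case True then show ?thesis using Lp_ideal_eq_Lp_zero[OF ideal] by blast
  next
    case False
    then obtain f where f: "f \<in> J" "\<not> (AE x in pi. f x = 0)" by blast
    define h0 where "h0 x = \<bar>f x\<bar>" for x
    have h0_J: "h0 \<in> J" unfolding h0_def by (rule Lp_ideal_abs[OF ideal f(1)])
    have K: "K \<in> borel \<rightarrow>\<^sub>M subprob_algebra borel" using kernel by (rule measurable_prob_algebraD)
    have "AE x in pi. \<exists>n. (valop K nu phi ^^ n) h0 x > 0"
      using f(2) Lp_ideal_subset[OF ideal] h0_J A1_phi_pos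
      by (intro valop_iterates_AE_pos[OF K pi_prob pi_sets
            bind_eq_if_stationary[OF K pi_prob pi_sets pi_stationary] nu_prob phi_meas _ A2 A3_V_defined A3_V_maps])
        (auto simp: h0_def)
    moreover have "(valop K nu phi ^^ n) h0 \<in> J" for n
      by (induction n) (simp_all add: h0_J invariant)
    moreover have "(valop K nu phi ^^ n) h0 x \<ge> 0" for n x
      by (rule valop_funpow_nonneg) (simp_all add: less_imp_le A1_phi_pos h0_def)
    ultimately have "J = Lp pi p"
      using p_ge by (intro Lp_closed_ideal_eq_Lp[OF ideal closed]) auto
    then show ?thesis ..
  qed
qed

end
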